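(* There exist a Cauchy--de Branges space $\mathcal{H}(T,A,\mu)$ with $A$ of order $2$, and two closed subspaces $\mathcal{H}_1,\mathcal{H}_2\subset\mathcal{H}(T,A,\mu)$ which are nearly invariant, closed under $f\mapsto f^*$ ($f^*(z)=\overline{f(\overline z)}$), and without common zeros, such that neither $\mathcal{H}_1\subset\mathcal{H}_2$ nor $\mathcal{H}_2\subset\mathcal{H}_1$. Moreover, these subspaces can be chosen of the form $\mathcal{H}_j=\mathcal{H}_{G_j}$, $j=1,2$, for suitable entire functions $G_1,G_2\in\mathcal{H}(T,A,\mu)$ with simple zeros.
   Context: Cauchy--de Branges space: $T=\{t_n\}\subset\mathbb{C}$ pairwise distinct with $|t_n|\to\infty$ and finite convergence exponent; $A$ an entire function with simple zeros whose zero set is exactly $T$; $\mu_n>0$ with $\sum_n\frac{\mu_n}{|t_n|^2+1}<\infty$; $$\mathcal{H}(T,A,\mu)=\Big\{f(z)=A(z)\sum_n\frac{a_n\mu_n^{1/2}}{z-t_n}:\ a\in\ell^2\Big\},\qquad \|f\|=\|a\|_{\ell^2}.$$ A closed subspace $\mathcal{H}_0$ is nearly invariant if there is $w_0\in\mathbb{C}$ with $f/(z-w_0)\in\mathcal{H}_0$ whenever $f\in\mathcal{H}_0$, $f(w_0)=0$; it has no common zeros if no $w\in\mathbb{C}$ is a zero of all $f\in\mathcal{H}_0$. For an entire function $G$ such that $G(z)/(z-\lambda)\in\mathcal{H}(T,A,\mu)$ whenever $G(\lambda)=0$, define $\mathcal{H}_G=\overline{\operatorname{Span}}\{G(z)/(z-\lambda):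 G(\lambda)=0\}$ (closure in $\mathcal{H}(T,A,\mu)$). *)

theory Defs
  imports "HOL-Analysis.Analysis"
begin

definition cdb_data :: "(nat \<Rightarrow> complex) \<Rightarrow> (complex \<Rightarrow> complex) \<Rightarrow> (nat \<Rightarrow> real) \<Rightarrow> bool" where
  "cdb_data t A \<mu> \<longleftrightarrow>
     inj t \<and>
     filterlim (\<lambda>n. norm (t n)) at_top sequentially \<and>
     (\<exists>p>0. summable (\<lambda>n. if t n = 0 then 0 else norm (t n) powr (- p))) \<and>
     A holomorphic_on UNIV \<and>
     {z. A z = 0} = range t \<and>
     (\<forall>n. deriv A (t n) \<noteq> 0) \<and>
     (\<forall>n. \<mu> n > 0) \<and>
     summable (\<lambda>n. \<mu> n / ((norm (t n))\<^sup>2 + 1))"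

definition is_l2 :: "(nat \<Rightarrow> complex) \<Rightarrow> bool" where
  "is_l2 a \<longleftrightarrow> summable (\<lambda>n. (norm (a n))\<^sup>2)"

text \<open>The function A(z) * sum a_n mu_n^(1/2) / (z - t_n); at z = t_m the value is the
 (removable-singularity) limit A'(t_m) a_m mu_m^(1/2).\<close>
definition cdb_fun :: "(nat \<Rightarrow> complex) \<Rightarrow> (complex \<Rightarrow> complex) \<Rightarrow> (nat \<Rightarrow> real) \<Rightarrow> (nat \<Rightarrow> complex)
    \<Rightarrow> complex \<Rightarrow> complex" where
  "cdb_fun t A \<mu> a z =
     (if z \<in> range t then (let m = inv t z in deriv A z * a m * of_real (sqrt (\<mu> m)))
      else A z * (\<Sum>n. a n * of_real (sqrt (\<mu> n)) / (z - t n)))"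

definition cdb_space :: "(nat \<Rightarrow> complex) \<Rightarrow> (complex \<Rightarrow> complex) \<Rightarrow> (nat \<Rightarrow> real) \<Rightarrow> (complex \<Rightarrow> complex) set" where
  "cdb_space t A \<mu> = {f. \<exists>a. is_l2 a \<and> f = cdb_fun t A \<mu> a}"

text \<open>Norm: the l2-norm of the coefficient sequence a, recovered as
 a_n = f(t_n) / (A'(t_n) mu_n^(1/2)).\<close>
definition cdb_norm :: "(nat \<Rightarrow> complex) \<Rightarrow> (complex \<Rightarrow> complex) \<Rightarrow> (nat \<Rightarrow> real) \<Rightarrow> (complex \<Rightarrow> complex) \<Rightarrow> real" where
  "cdb_norm t A \<mu> f = sqrt (\<Sum>n. (norm (f (t n)))\<^sup>2 / ((norm (deriv A (t n)))\<^sup>2 * \<mu> n))"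

definition cdb_closed_subspace :: "(nat \<Rightarrow> complex) \<Rightarrow> (complex \<Rightarrow> complex) \<Rightarrow> (nat \<Rightarrow> real)
    \<Rightarrow> (complex \<Rightarrow> complex) set \<Rightarrow> bool" where
  "cdb_closed_subspace t A \<mu> S \<longleftrightarrow>
     S \<subseteq> cdb_space t A \<mu> \<and>
     (\<lambda>_. 0) \<in> S \<and>
     (\<forall>f\<in>S. \<forall>g\<in>S. (\<lambda>z. f z + g z) \<in> S) \<and>
     (\<forall>c. \<forall>f\<in>S. (\<lambda>z. c * f z) \<in> S) \<and>
     (\<forall>F f. (\<forall>k. F k \<in> S) \<longrightarrow> f \<in> cdb_space t A \<mu> \<longrightarrow>
        ((\<lambda>k. cdb_norm t A \<mu> (\<lambda>z. F k z - f z)) \<longlonglongrightarrow> 0) \<longrightarrow> f \<in> S)"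

text \<open>f(z)/(z - w), extended by its removable value f'(w) at z = w (used when f(w) = 0).\<close>
definition divq :: "(complex \<Rightarrow> complex) \<Rightarrow> complex \<Rightarrow> complex \<Rightarrow> complex" where
  "divq f w z = (if z = w then deriv f w else f z / (z - w))"

definition nearly_invariant :: "(complex \<Rightarrow> complex) set \<Rightarrow> bool" where
  "nearly_invariant S \<longleftrightarrow> (\<exists>w0. \<forall>f\<in>S. f w0 = 0 \<longrightarrow> divq f w0 \<in> S)"

definition no_common_zeros :: "(complex \<Rightarrow> complex) set \<Rightarrow> bool" where
  "no_common_zeros S \<longleftrightarrow> (\<forall>w. \<exists>f\<in>S. f w \<noteq> 0)"

definition star_closed :: "(complex \<Rightarrow> complex) set \<Rightarrow> bool" where
  "star_closed S \<longleftrightarrow> (\<forall>f\<in>S. (\<lambda>z. cnj (f (cnj z))) \<in> S)"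

definition H_G :: "(nat \<Rightarrow> complex) \<Rightarrow> (complex \<Rightarrow> complex) \<Rightarrow> (nat \<Rightarrow> real) \<Rightarrow> (complex \<Rightarrow> complex)
    \<Rightarrow> (complex \<Rightarrow> complex) set" where
  "H_G t A \<mu> G = \<Inter>{S. cdb_closed_subspace t A \<mu> S \<and> {divq G l | l. G l = 0} \<subseteq> S}"

definition has_order :: "(complex \<Rightarrow> complex) \<Rightarrow> real \<Rightarrow> bool" where
  "has_order A \<rho> \<longleftrightarrow>
     (\<forall>l>\<rho>. \<exists>R. \<forall>z. norm z \<ge> R \<longrightarrow> norm (A z) \<le> exp (norm z powr l)) \<and>
     (\<forall>l<\<rho>. \<not> (\<exists>R. \<forall>z. norm z \<ge> R \<longrightarrow> norm (A z) \<le> exp (norm z powr l)))"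

end

theory Submission
  imports Defs "HOL-Complex_Analysis.Complex_Analysis" "HOL-Real_Asymp.Real_Asymp"
begin

text \<open>
  Take \<open>A(z) = exp(z^2) sin z cos(iz)\<close>, an entire function of order 2 whose zeros, all simple,
  are the nodes \<open>t\<^sub>n\<close> enumerating \<open>\<pi>\<int> \<union> i\<pi>(\<int> + 1/2)\<close>, and take \<open>\<mu> = 1\<close>.
  For \<open>G(z) = (z - 1) exp(z^2 + bz)\<close> the only quotient \<open>G(z)/(z - \<lambda>)\<close> with \<open>G(\<lambda>) = 0\<close> is
  \<open>g(z) = exp(z^2 + bz)\<close>, so \<open>H_G\<close> is the line \<open>\<complex>g\<close>. A line is closed because norm convergence
  forces convergence of the values at the nodes; a line spanned by a zero-free function with
  \<open>g* = g\<close> is nearly invariant, closed under \<open>*\<close> and without common zeros; and the lines for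
  \<open>b = 0\<close> and \<open>b = 1/2\<close> are incomparable.

  The real work is to show that \<open>exp(z^2) (\<alpha>z + \<beta>) e^(bz)\<close> lies in the space when \<open>|b| \<le> 1/2\<close>.
  Integrating \<open>(\<alpha>w + \<beta>) e^(bw) / (sin w cos(iw) (w - z))\<close> over the rectangles with corners
  \<open>\<plusminus>((N + 1/2)\<pi> + iN\<pi>)\<close>, on whose sides \<open>|sin w cos(iw)| \<ge> e^(N\<pi>)/8\<close>, the residue theorem gives
  \<open>(\<alpha>z + \<beta>) e^(bz) / (sin z cos(iz)) = \<Sum>\<^sub>n (\<alpha>t\<^sub>n + \<beta>) e^(bt\<^sub>n) / (A\<^sub>0'(t\<^sub>n) (z - t\<^sub>n))\<close>
  with \<open>A\<^sub>0 = sin z cos(iz)\<close>; the coefficients decay like \<open>exp(-|t\<^sub>n|/4)\<close> since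
  \<open>|A\<^sub>0'(t\<^sub>n)| \<ge> exp|t\<^sub>n|/4\<close>, which makes them square summable.
\<close>

section \<open>Closed lines in a Cauchy--de Branges space\<close>

definition multiples :: "(complex \<Rightarrow> complex) \<Rightarrow> (complex \<Rightarrow> complex) set" where
  "multiples g = {\<lambda>z. c * g z | c. True}"

lemma self_in_multiples: "g \<in> multiples g"
  unfolding multiples_def by (intro CollectI exI[of _ 1]) simp

lemma cdb_dataD:
  assumes "cdb_data t A \<mu>"
  shows "inj t" and "deriv A (t n) \<noteq> 0" and "\<mu> n > 0"
  using assms unfolding cdb_data_def by auto

lemma cdb_fun_node:
  assumes "inj t"
  shows "cdb_fun t A \<mu> a (t n) = deriv A (t n) * a n * of_real (sqrt (\<mu> n))"
  unfolding cdb_fun_def using inv_f_f[OF assms] by (simp add: Let_def)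

lemma zero_in_cdb_space: "(\<lambda>_. 0) \<in> cdb_space t A \<mu>"
proof -
  have "(\<lambda>_. 0) = cdb_fun t A \<mu> (\<lambda>_. 0)" by (auto simp: cdb_fun_def fun_eq_iff Let_def)
  moreover have "is_l2 (\<lambda>_. 0)" by (simp add: is_l2_def)
  ultimately show ?thesis unfolding cdb_space_def by blast
qed

lemma cdb_space_eq_if_eq_on_nodes:
  assumes data: "cdb_data t A \<mu>" and "f \<in> cdb_space t A \<mu>" "g \<in> cdb_space t A \<mu>"
    and eq: "\<And>n. f (t n) = g (t n)"
  shows "f = g"
proof -
  obtain a b where ab: "f = cdb_fun t A \<mu> a" "g = cdb_fun t A \<mu> b"
    using assms(2,3) unfolding cdb_space_def by blast
  have "a n = b n" for n
    using eq[of n] cdb_dataD(2,3)[OF data, of n] unfolding ab cdb_fun_node[OF cdb_dataD(1)[OF data]] by simp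
  then show ?thesis unfolding ab by (metis ext)
qed

lemma is_l2_diff:
  assumes "is_l2 a" "is_l2 b"
  shows "is_l2 (\<lambda>n. a n - b n)"
  unfolding is_l2_def
proof (rule summable_comparison_test[OF _ summable_add[OF summable_mult summable_mult]])
  show "summable (\<lambda>n. (norm (a n))\<^sup>2)" "summable (\<lambda>n. (norm (b n))\<^sup>2)"
    using assms unfolding is_l2_def by auto
  have "(norm (a n - b n))\<^sup>2 \<le> 2 * (norm (a n))\<^sup>2 + 2 * (norm (b n))\<^sup>2" for n
  proof -
    have "(norm (a n - b n))\<^sup>2 \<le> (norm (a n) + norm (b n))\<^sup>2"
      by (intro power_mono norm_triangle_ineq4) simp
    also have "\<dots> \<le> 2 * (norm (a n))\<^sup>2 + 2 * (norm (b n))\<^sup>2"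
      using sum_squares_bound[of "norm (a n)" "norm (b n)"] by (simp add: power2_eq_square algebra_simps)
    finally show ?thesis .
  qed
  then show "\<exists>N. \<forall>n\<ge>N. norm ((norm (a n - b n))\<^sup>2) \<le> 2 * (norm (a n))\<^sup>2 + 2 * (norm (b n))\<^sup>2"
    by simp
qed

lemma cdb_norm_diff:
  assumes "cdb_data t A \<mu>"
  shows "cdb_norm t A \<mu> (\<lambda>z. cdb_fun t A \<mu> a z - cdb_fun t A \<mu> b z) = sqrt (\<Sum>n. (norm (a n - b n))\<^sup>2)"
proof -
  have "(norm (cdb_fun t A \<mu> a (t n) - cdb_fun t A \<mu> b (t n)))\<^sup>2 / ((norm (deriv A (t n)))\<^sup>2 * \<mu> n)
      = (norm (a n - b n))\<^sup>2" for n
  proof -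
    have "cdb_fun t A \<mu> a (t n) - cdb_fun t A \<mu> b (t n) = deriv A (t n) * of_real (sqrt (\<mu> n)) * (a n - b n)"
      unfolding cdb_fun_node[OF cdb_dataD(1)[OF assms]] by (simp add: algebra_simps)
    then show ?thesis
      using cdb_dataD(2,3)[OF assms, of n] by (simp add: norm_mult power_mult_distrib)
  qed
  then show ?thesis unfolding cdb_norm_def by simp
qed

lemma cdb_norm_tendsto_0_imp_node_tendsto:
  assumes data: "cdb_data t A \<mu>" and F: "\<And>k. F k \<in> cdb_space t A \<mu>" and f: "f \<in> cdb_space t A \<mu>"
    and lim: "(\<lambda>k. cdb_norm t A \<mu> (\<lambda>z. F k z - f z)) \<longlonglongrightarrow> 0"
  shows "(\<lambda>k. F k (t n)) \<longlonglongrightarrow> f (t n)"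
proof -
  have "\<forall>k. \<exists>a. is_l2 a \<and> F k = cdb_fun t A \<mu> a" using F unfolding cdb_space_def by blast
  from choice[OF this] obtain a where a: "\<And>k. is_l2 (a k)" "\<And>k. F k = cdb_fun t A \<mu> (a k)"
    by blast
  obtain b where b: "is_l2 b" "f = cdb_fun t A \<mu> b" using f unfolding cdb_space_def by blast
  define T where "T k = (\<lambda>n. (norm (a k n - b n))\<^sup>2)" for k
  have summable: "summable (T k)" for k
    using is_l2_diff[OF a(1) b(1)] unfolding T_def is_l2_def .
  have "(cdb_norm t A \<mu> (\<lambda>z. F k z - f z))\<^sup>2 = suminf (T k)" for k
    using cdb_norm_diff[OF data] suminf_nonneg[OF summable] unfolding a(2) b(2) T_def by simp
  then have lim_sum: "(\<lambda>k. suminf (T k)) \<longlonglongrightarrow> 0" using tendsto_power[OF lim, of 2] by simp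
  have term_bounds: "0 \<le> T k n" "T k n \<le> suminf (T k)" for k
    using sum_le_suminf[OF summable, of "{n}"] by (simp_all add: T_def)
  have "(\<lambda>k. T k n) \<longlonglongrightarrow> 0"
    by (rule tendsto_sandwich[OF always_eventually always_eventually tendsto_const lim_sum])
      (simp_all add: term_bounds)
  then have "(\<lambda>k. sqrt (T k n)) \<longlonglongrightarrow> 0" using tendsto_real_sqrt[of "\<lambda>k. T k n" 0] by simp
  then have "(\<lambda>k. a k n - b n) \<longlonglongrightarrow> 0" by (simp add: T_def tendsto_norm_zero_iff)
  then have "(\<lambda>k. a k n) \<longlonglongrightarrow> b n" by (simp add: LIM_zero_iff)
  then show ?thesis
    unfolding a(2) b(2) cdb_fun_node[OF cdb_dataD(1)[OF data]] by (intro tendsto_intros)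
qed

lemma multiples_closed_subspace:
  assumes data: "cdb_data t A \<mu>" and in_space: "\<And>c. (\<lambda>z. c * g z) \<in> cdb_space t A \<mu>"
    and g0: "g (t n0) \<noteq> 0"
  shows "cdb_closed_subspace t A \<mu> (multiples g)"
  unfolding cdb_closed_subspace_def
proof (intro conjI allI impI ballI)
  show "multiples g \<subseteq> cdb_space t A \<mu>" using in_space unfolding multiples_def by blast
  show "(\<lambda>_. 0) \<in> multiples g" unfolding multiples_def by (intro CollectI exI[of _ 0]) simp
next
  fix f h assume "f \<in> multiples g" "h \<in> multiples g"
  then show "(\<lambda>z. f z + h z) \<in> multiples g"
    unfolding multiples_def by (force simp: distrib_right[symmetric])
next
  fix c f assume "f \<in> multiples g"
  then show "(\<lambda>z. c * f z) \<in> multiples g"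
    unfolding multiples_def by (auto simp: mult.assoc[symmetric])
next
  fix F f
  assume F: "\<forall>k. F k \<in> multiples g" and f: "f \<in> cdb_space t A \<mu>"
    and lim: "(\<lambda>k. cdb_norm t A \<mu> (\<lambda>z. F k z - f z)) \<longlonglongrightarrow> 0"
  have "\<forall>k. \<exists>c. F k = (\<lambda>z. c * g z)" using F unfolding multiples_def by blast
  then obtain c where c: "\<And>k. F k = (\<lambda>z. c k * g z)" by (auto dest!: choice)
  have node_lim: "(\<lambda>k. c k * g (t n)) \<longlonglongrightarrow> f (t n)" for n
    using cdb_norm_tendsto_0_imp_node_tendsto[OF data _ f lim] in_space unfolding c by simp
  define c0 where "c0 = f (t n0) / g (t n0)"
  have "(\<lambda>k. c k * g (t n0) / g (t n0)) \<longlonglongrightarrow> c0"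
    unfolding c0_def by (intro tendsto_intros node_lim g0)
  then have "c \<longlonglongrightarrow> c0" using g0 by simp
  then have "f (t n) = c0 * g (t n)" for n
    using LIMSEQ_unique[OF node_lim] tendsto_mult_right by blast
  then have "f = (\<lambda>z. c0 * g z)" by (intro cdb_space_eq_if_eq_on_nodes[OF data f in_space])
  then show "f \<in> multiples g" unfolding multiples_def by blast
qed

lemma H_G_eq_multiples:
  assumes quotients: "{divq G l | l. G l = 0} = {g}" and closed: "cdb_closed_subspace t A \<mu> (multiples g)"
  shows "H_G t A \<mu> G = multiples g"
proof
  show "H_G t A \<mu> G \<subseteq> multiples g"
    unfolding H_G_def using closed quotients self_in_multiples by (intro Inter_lower) auto
  show "multiples g \<subseteq> H_G t A \<mu> G"
    unfolding H_G_def
  proof (intro subsetI InterI)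
    fix f S assume f: "f \<in> multiples g"
      and S: "S \<in> {S. cdb_closed_subspace t A \<mu> S \<and> {divq G l | l. G l = 0} \<subseteq> S}"
    then obtain c where "f = (\<lambda>z. c * g z)" unfolding multiples_def by blast
    moreover have "g \<in> S" using S quotients by auto
    ultimately show "f \<in> S" using S unfolding cdb_closed_subspace_def by blast
  qed
qed

lemma nearly_invariant_multiples:
  assumes "g w \<noteq> 0"
  shows "nearly_invariant (multiples g)"
  unfolding nearly_invariant_def
proof (intro exI ballI impI)
  fix f assume "f \<in> multiples g" "f w = 0"
  with assms have f0: "f = (\<lambda>_. 0)" unfolding multiples_def by auto
  have "divq (\<lambda>_. 0) w = (\<lambda>z. 0 * g z)" by (simp add: divq_def fun_eq_iff)
  then show "divq f w \<in> multiples g" unfolding f0 multiples_def by blast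
qed

lemma star_closed_multiples:
  assumes "\<And>z. cnj (g (cnj z)) = g z"
  shows "star_closed (multiples g)"
  unfolding star_closed_def multiples_def
proof clarify
  fix c
  have "(\<lambda>z. cnj (c * g (cnj z))) = (\<lambda>z. cnj c * g z)" using assms by simp
  then show "\<exists>c'. (\<lambda>z. cnj (c * g (cnj z))) = (\<lambda>z. c' * g z) \<and> True" by blast
qed

lemma no_common_zeros_multiples:
  assumes "\<And>z. g z \<noteq> 0"
  shows "no_common_zeros (multiples g)"
  unfolding no_common_zeros_def
  using self_in_multiples assms by blast

lemma multiples_subset_iff: "multiples g \<subseteq> multiples h \<longleftrightarrow> (\<exists>c. g = (\<lambda>z. c * h z))"
proof
  assume "multiples g \<subseteq> multiples h"
  with self_in_multiples show "\<exists>c. g = (\<lambda>z. c * h z)" unfolding multiples_def by blast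
next
  assume "\<exists>c. g = (\<lambda>z. c * h z)"
  then obtain c where "g = (\<lambda>z. c * h z)" by blast
  then have "(\<lambda>z. c' * g z) = (\<lambda>z. (c' * c) * h z)" for c' by (simp add: mult.assoc)
  then show "multiples g \<subseteq> multiples h" unfolding multiples_def by blast
qed

lemma exp_abs_le_exp_plus_inverse: "exp \<bar>x\<bar> \<le> exp x + inverse (exp (x::real))"
proof (cases "x \<ge> 0")
  case False
  then have "inverse (exp x) = exp \<bar>x\<bar>" by (simp add: exp_minus[symmetric])
  then show ?thesis by simp
next
  case True
  have "0 < inverse (exp x)" by simp
  then show ?thesis using True by simp
qed

lemma exp_abs_minus_1_le_abs_exp_minus_inverse: "exp \<bar>x\<bar> - 1 \<le> \<bar>exp x - inverse (exp (x::real))\<bar>"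
proof (cases "x \<ge> 0")
  case True
  then have "inverse (exp x) \<le> 1" "inverse (exp x) \<le> exp x"
    by (simp_all add: exp_minus[symmetric])
  then show ?thesis using True by simp
next
  case False
  then have "exp x \<le> 1" "inverse (exp x) = exp \<bar>x\<bar>" by (simp_all add: exp_minus[symmetric])
  then show ?thesis by simp
qed

lemma norm_sin_le_exp_norm: "norm (sin (z::complex)) \<le> exp (norm z)"
proof -
  have "norm (sin z) = norm (exp (\<i> * z) - exp (- (\<i> * z))) / 2"
    unfolding sin_exp_eq by (simp add: norm_divide norm_mult)
  also have "\<dots> \<le> (norm (exp (\<i> * z)) + norm (exp (- (\<i> * z)))) / 2"
    by (intro divide_right_mono norm_triangle_ineq4) simp
  also have "\<dots> \<le> (exp (norm z) + exp (norm z)) / 2"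
    using abs_Im_le_cmod[of z] by (intro divide_right_mono add_mono) simp_all
  finally show ?thesis by simp
qed

lemma norm_sin_ge_half:
  assumes "cos (2 * Re w) = -1"
  shows "1/2 \<le> norm (sin w)"
proof (rule power2_le_imp_le)
  have "(norm (sin w))\<^sup>2 = (exp (2 * Im w) + inverse (exp (2 * Im w)) + 2) / 4"
    using norm_sin_squared[of w] assms by simp
  moreover have "0 < exp (2 * Im w)" "0 < inverse (exp (2 * Im w))" by simp_all
  ultimately show "(1/2)\<^sup>2 \<le> (norm (sin w))\<^sup>2" by (simp add: power2_eq_square)
qed simp

lemma norm_sin_ge_exp_abs_Im:
  assumes "1 \<le> \<bar>Im w\<bar>"
  shows "exp \<bar>Im w\<bar> / 4 \<le> norm (sin w)"
proof (rule power2_le_imp_le)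
  have "(exp (2 * Im w) + inverse (exp (2 * Im w)) - 2) / 4 \<le> (norm (sin w))\<^sup>2"
    using norm_sin_squared[of w] cos_le_one[of "2 * Re w"] by simp
  moreover have "exp (2 * \<bar>Im w\<bar>) \<le> exp (2 * Im w) + inverse (exp (2 * Im w))"
    using exp_abs_le_exp_plus_inverse[of "2 * Im w"] by (simp add: abs_mult)
  moreover have "3 \<le> exp (2 * \<bar>Im w\<bar>)" using exp_ge_add_one_self[of "2 * \<bar>Im w\<bar>"] assms by linarith
  moreover have "(exp \<bar>Im w\<bar> / 4)\<^sup>2 = exp (2 * \<bar>Im w\<bar>) / 16"
    by (simp add: power2_eq_square exp_add[symmetric])
  moreover have "e / 16 \<le> n" if "(s - 2) / 4 \<le> n" "e \<le> s" "3 \<le> e" for e s n :: real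
    using that by (simp add: field_simps)
  ultimately show "(exp \<bar>Im w\<bar> / 4)\<^sup>2 \<le> (norm (sin w))\<^sup>2" by metis
qed simp

lemma norm_cos_i_times_squared:
  "(norm (cos (\<i> * w)))\<^sup>2 = (cos (Im w))\<^sup>2 + (exp (Re w) - inverse (exp (Re w)))\<^sup>2 / 4"
  using norm_cos_squared[of "\<i> * w"] by simp

lemma norm_cos_i_times_ge_exp_abs_Re:
  assumes "1 \<le> \<bar>Re w\<bar>"
  shows "exp \<bar>Re w\<bar> / 4 \<le> norm (cos (\<i> * w))"
proof (rule power2_le_imp_le)
  have "e / 4 \<le> d / 2" if "e - 1 \<le> d" "2 \<le> e" for e d :: real
    using that by linarith
  moreover have "2 \<le> exp \<bar>Re w\<bar>" using exp_ge_add_one_self[of "\<bar>Re w\<bar>"] assms by linarith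
  ultimately have "exp \<bar>Re w\<bar> / 4 \<le> \<bar>exp (Re w) - inverse (exp (Re w))\<bar> / 2"
    using exp_abs_minus_1_le_abs_exp_minus_inverse[of "Re w"] by blast
  then have "(exp \<bar>Re w\<bar> / 4)\<^sup>2 \<le> (\<bar>exp (Re w) - inverse (exp (Re w))\<bar> / 2)\<^sup>2"
    by (rule power_mono) simp
  also have "\<dots> = (exp (Re w) - inverse (exp (Re w)))\<^sup>2 / 4" by (simp add: power_divide)
  also have "\<dots> \<le> (norm (cos (\<i> * w)))\<^sup>2" unfolding norm_cos_i_times_squared by simp
  finally show "(exp \<bar>Re w\<bar> / 4)\<^sup>2 \<le> (norm (cos (\<i> * w)))\<^sup>2" .
qed simp

lemma norm_cos_i_times_ge_1:
  assumes "(cos (Im w))\<^sup>2 = 1"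
  shows "1 \<le> norm (cos (\<i> * w))"
proof (rule power2_le_imp_le)
  show "1\<^sup>2 \<le> (norm (cos (\<i> * w)))\<^sup>2" unfolding norm_cos_i_times_squared using assms by simp
qed simp

lemma contour_integral_rectpath_bound:
  assumes "f contour_integrable_on rectpath a b" and "0 \<le> B"
    and bound: "\<And>w. w \<in> path_image (rectpath a b) \<Longrightarrow> norm (f w) \<le> B"
  shows "norm (contour_integral (rectpath a b) f) \<le> B * (2 * \<bar>Re b - Re a\<bar> + 2 * \<bar>Im b - Im a\<bar>)"
proof -
  define a2 where "a2 = Complex (Re b) (Im a)"
  define a4 where "a4 = Complex (Re a) (Im b)"
  have rp: "rectpath a b = linepath a a2 +++ linepath a2 b +++ linepath b a4 +++ linepath a4 a"
    unfolding rectpath_def a2_def a4_def Let_def by simp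
  have "f contour_integrable_on linepath a a2" "f contour_integrable_on linepath a2 b"
      "f contour_integrable_on linepath b a4" "f contour_integrable_on linepath a4 a"
    using assms(1) unfolding rp by (auto simp: valid_path_join)
  note integrable = this
  have side: "norm (contour_integral (linepath p q) f) \<le> B * norm (q - p)"
    if "f contour_integrable_on linepath p q" "closed_segment p q \<subseteq> path_image (rectpath a b)" for p q
    using that bound by (intro contour_integral_bound_linepath[OF _ assms(2)]) auto
  have "path_image (rectpath a b)
      = closed_segment a a2 \<union> closed_segment a2 b \<union> closed_segment b a4 \<union> closed_segment a4 a"
    unfolding rp by (simp add: path_image_join Un_assoc)
  then have "norm (contour_integral (linepath a a2) f) \<le> B * norm (a2 - a)"
      "norm (contour_integral (linepath a2 b) f) \<le> B * norm (b - a2)"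
      "norm (contour_integral (linepath b a4) f) \<le> B * norm (a4 - b)"
      "norm (contour_integral (linepath a4 a) f) \<le> B * norm (a - a4)"
    using integrable by (intro side; blast)+
  moreover have "contour_integral (rectpath a b) f =
      contour_integral (linepath a a2) f + contour_integral (linepath a2 b) f +
      contour_integral (linepath b a4) f + contour_integral (linepath a4 a) f"
    unfolding rp using integrable by (simp add: contour_integrable_joinI valid_path_join)
  ultimately have "norm (contour_integral (rectpath a b) f) \<le>
      B * norm (a2 - a) + B * norm (b - a2) + B * norm (a4 - b) + B * norm (a - a4)"
    by (smt (verit) norm_triangle_ineq)
  then show ?thesis
    unfolding a2_def a4_def by (simp add: norm_complex_def abs_minus_commute algebra_simps)
qed

section \<open>The zeros of \<open>sin z cos(iz)\<close>\<close>

definition sin_cosh :: "complex \<Rightarrow> complex" where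
  "sin_cosh z = sin z * cos (\<i> * z)"

definition node :: "nat \<Rightarrow> complex" where
  "node n =
    (if n mod 4 = 0 then of_real (real (n div 4) * pi)
     else if n mod 4 = 1 then of_real (- (real (n div 4) + 1) * pi)
     else if n mod 4 = 2 then \<i> * of_real ((real (n div 4) + 1/2) * pi)
     else \<i> * of_real (- (real (n div 4) + 1/2) * pi))"

lemma node_simps:
  "node (4 * m) = of_real (real m * pi)"
  "node (4 * m + 1) = of_real (- (real m + 1) * pi)"
  "node (4 * m + 2) = \<i> * of_real ((real m + 1/2) * pi)"
  "node (4 * m + 3) = \<i> * of_real (- (real m + 1/2) * pi)"
proof -
  have "(4 * m + 1) mod 4 = 1" "(4 * m + 2) mod 4 = 2" "(4 * m + 3) mod 4 = 3"
    "(4 * m + 1) div 4 = m" "(4 * m + 2) div 4 = m" "(4 * m + 3) div 4 = m"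
    by presburger+
  then show "node (4 * m) = of_real (real m * pi)"
    "node (4 * m + 1) = of_real (- (real m + 1) * pi)"
    "node (4 * m + 2) = \<i> * of_real ((real m + 1/2) * pi)"
    "node (4 * m + 3) = \<i> * of_real (- (real m + 1/2) * pi)"
    unfolding node_def by simp_all
qed

lemma node_cases:
  obtains (real_pos) m where "n = 4 * m" "node n = of_real (real m * pi)"
  | (real_neg) m where "n = 4 * m + 1" "node n = of_real (- (real m + 1) * pi)"
  | (imag_pos) m where "n = 4 * m + 2" "node n = \<i> * of_real ((real m + 1/2) * pi)"
  | (imag_neg) m where "n = 4 * m + 3" "node n = \<i> * of_real (- (real m + 1/2) * pi)"
proof -
  have "n = 4 * (n div 4) \<or> n = 4 * (n div 4) + 1 \<or> n = 4 * (n div 4) + 2 \<or> n = 4 * (n div 4) + 3"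
    by presburger
  then show ?thesis using that node_simps by metis
qed

lemma inj_node: "inj node"
proof (rule injI)
  fix n n' assume "node n = node n'"
  then show "n = n'"
    by (cases n rule: node_cases; cases n' rule: node_cases) (auto simp: complex_eq_iff)
qed

lemma norm_node_ge: "(real n - 3) * pi / 4 \<le> norm (node n)"
proof (cases n rule: node_cases)
  case (real_pos m)
  show ?thesis unfolding real_pos(2) norm_of_real abs_mult unfolding real_pos(1) by (simp add: field_simps)
next
  case (real_neg m)
  show ?thesis unfolding real_neg(2) norm_of_real abs_mult unfolding real_neg(1) by (simp add: field_simps)
next
  case (imag_pos m)
  show ?thesis unfolding imag_pos(2) norm_mult norm_of_real abs_mult unfolding imag_pos(1) by (simp add: field_simps)
next
  case (imag_neg m)
  show ?thesis unfolding imag_neg(2) norm_mult norm_of_real abs_mult unfolding imag_neg(1) by (simp add: field_simps)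
qed

lemma filterlim_norm_node: "filterlim (\<lambda>n. norm (node n)) at_top sequentially"
proof (rule filterlim_at_top_mono[OF _ always_eventually])
  show "filterlim (\<lambda>n. (real n - 3) * pi / 4) at_top sequentially" by real_asymp
qed (use norm_node_ge in blast)

lemma sin_cosh_eq_0_iff: "sin_cosh z = 0 \<longleftrightarrow> z \<in> range node"
proof
  assume "sin_cosh z = 0"
  then consider "sin z = 0" | "cos (\<i> * z) = 0" by (auto simp: sin_cosh_def)
  then show "z \<in> range node"
  proof cases
    case 1
    then obtain k :: int where k: "z = of_real (k * pi)" by (auto simp: sin_eq_0)
    show ?thesis
    proof (cases "k \<ge> 0")
      case True
      then have "node (4 * nat k) = z" unfolding node_simps k by simp
      then show ?thesis by (metis rangeI)
    next
      case False
      then have "node (4 * nat (- k - 1) + 1) = z" unfolding node_simps k by (simp add: of_nat_nat)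
      then show ?thesis by (metis rangeI)
    qed
  next
    case 2
    then obtain k :: int where "\<i> * z = of_real (k * pi) + of_real pi / 2" by (auto simp: cos_eq_0)
    moreover have "z = - \<i> * (\<i> * z)" by simp
    ultimately have z: "z = \<i> * of_real (- (k + 1/2) * pi)" by (simp add: algebra_simps)
    show ?thesis
    proof (cases "k \<ge> 0")
      case True
      then have "node (4 * nat k + 3) = z" unfolding node_simps z by simp
      then show ?thesis by (metis rangeI)
    next
      case False
      then have "node (4 * nat (- k - 1) + 2) = z" unfolding node_simps z by (simp add: of_nat_nat algebra_simps)
      then show ?thesis by (metis rangeI)
    qed
  qed
next
  assume "z \<in> range node"
  then obtain n where n: "z = node n" by blast
  show "sin_cosh z = 0"
  proof (cases n rule: node_cases)
    case (real_pos m)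
    have "sin z = 0" unfolding n real_pos(2) sin_eq_0 by (rule exI[of _ "int m"]) simp
    then show ?thesis by (simp add: sin_cosh_def)
  next
    case (real_neg m)
    have "sin z = 0" unfolding n real_neg(2) sin_eq_0 by (rule exI[of _ "- int m - 1"]) simp
    then show ?thesis by (simp add: sin_cosh_def)
  next
    case (imag_pos m)
    have "cos (\<i> * z) = 0" unfolding n imag_pos(2) cos_eq_0
      by (rule exI[of _ "- int m - 1"]) (simp add: algebra_simps)
    then show ?thesis by (simp add: sin_cosh_def)
  next
    case (imag_neg m)
    have "cos (\<i> * z) = 0" unfolding n imag_neg(2) cos_eq_0
      by (rule exI[of _ "int m"]) (simp add: algebra_simps)
    then show ?thesis by (simp add: sin_cosh_def)
  qed
qed

lemma holomorphic_sin_cosh [holomorphic_intros]: "sin_cosh holomorphic_on S"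
  unfolding sin_cosh_def by (intro holomorphic_intros)

lemma deriv_sin_cosh: "deriv sin_cosh z = cos z * cos (\<i> * z) - \<i> * (sin z * sin (\<i> * z))"
  unfolding sin_cosh_def by (rule DERIV_imp_deriv) (auto intro!: derivative_eq_intros simp: algebra_simps)

lemma sin_cosh_has_deriv: "(sin_cosh has_field_derivative deriv sin_cosh z) (at z)"
  using holomorphic_sin_cosh[of UNIV] by (simp add: holomorphic_derivI)

lemma norm_deriv_sin_cosh_real:
  assumes "sin x = 0"
  shows "exp \<bar>x\<bar> / 2 \<le> norm (deriv sin_cosh (of_real x))"
proof -
  have "\<bar>cos x\<bar> = 1" using assms sin_cos_squared_add[of x] by (simp add: abs_square_eq_1)
  moreover have eq: "deriv sin_cosh (of_real x) = of_real (cos x * ((exp x + inverse (exp x)) / 2))"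
    unfolding deriv_sin_cosh cosh_real[symmetric] sin_of_real cos_of_real assms by simp
  ultimately have "norm (deriv sin_cosh (of_real x)) = (exp x + inverse (exp x)) / 2"
    unfolding eq norm_of_real by (simp add: abs_mult add_pos_pos)
  then show ?thesis using exp_abs_le_exp_plus_inverse[of x] by simp
qed

lemma norm_deriv_sin_cosh_imag:
  assumes "cos y = 0" and "1 \<le> \<bar>y\<bar>"
  shows "exp \<bar>y\<bar> / 4 \<le> norm (deriv sin_cosh (\<i> * of_real y))"
proof -
  have "\<bar>sin y\<bar> = 1" using assms(1) sin_cos_squared_add[of y] by (simp add: abs_square_eq_1)
  moreover have eq: "deriv sin_cosh (\<i> * of_real y) = of_real (- ((exp y - inverse (exp y)) / 2) * sin y)"
    unfolding deriv_sin_cosh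
    by (simp add: sin_i_times exp_of_real cos_of_real sin_of_real assms(1) complex_eq_iff)
  ultimately have "norm (deriv sin_cosh (\<i> * of_real y)) = \<bar>exp y - inverse (exp y)\<bar> / 2"
    unfolding eq norm_of_real by (simp add: abs_mult)
  moreover have "2 \<le> exp \<bar>y\<bar>" using exp_ge_add_one_self[of "\<bar>y\<bar>"] assms(2) by linarith
  ultimately show ?thesis using exp_abs_minus_1_le_abs_exp_minus_inverse[of y] by simp
qed

lemma norm_deriv_sin_cosh_node: "exp (norm (node n)) / 4 \<le> norm (deriv sin_cosh (node n))"
proof -
  have half_pi: "1 \<le> (real m + 1/2) * pi" for m
  proof -
    have "1 \<le> pi / 2" using pi_gt3 by simp
    also have "\<dots> \<le> (real m + 1/2) * pi" by (simp add: algebra_simps)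
    finally show ?thesis .
  qed
  have cos_half_pi: "cos ((real m + 1/2) * pi) = 0" for m
    by (simp add: distrib_right cos_add)
  have real_node: "exp (norm (of_real x :: complex)) / 4 \<le> norm (deriv sin_cosh (of_real x))" if "sin x = 0" for x
    using norm_deriv_sin_cosh_real[OF that] exp_ge_zero[of "\<bar>x\<bar>"] unfolding norm_of_real by linarith
  have imag_node: "exp (norm (\<i> * of_real y)) / 4 \<le> norm (deriv sin_cosh (\<i> * of_real y))"
    if "cos y = 0" "1 \<le> \<bar>y\<bar>" for y
    using norm_deriv_sin_cosh_imag[OF that] by (simp add: norm_mult)
  show ?thesis
  proof (cases n rule: node_cases)
    case (real_pos m)
    show ?thesis unfolding real_pos(2) by (rule real_node) (simp add: sin_npi)
  next
    case (real_neg m)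
    have "sin (- (real m + 1) * pi) = 0"
      by (metis minus_mult_left of_nat_Suc add.commute sin_minus sin_npi neg_0_equal_iff_equal)
    then show ?thesis unfolding real_neg(2) by (rule real_node)
  next
    case (imag_pos m)
    show ?thesis unfolding imag_pos(2) using half_pi[of m] cos_half_pi[of m] by (intro imag_node) simp_all
  next
    case (imag_neg m)
    have neg: "- (real m + 1/2) * pi = - ((real m + 1/2) * pi)" by (simp add: algebra_simps)
    have "cos (- (real m + 1/2) * pi) = 0" unfolding neg cos_minus by (rule cos_half_pi)
    moreover have "1 \<le> \<bar>- (real m + 1/2) * pi\<bar>"
      unfolding neg abs_minus_cancel using half_pi[of m] by linarith
    ultimately show ?thesis unfolding imag_neg(2) by (rule imag_node)
  qed
qed

lemma deriv_sin_cosh_node_nonzero: "deriv sin_cosh (node n) \<noteq> 0"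
proof -
  have "0 < exp (norm (node n)) / 4" by simp
  also have "\<dots> \<le> norm (deriv sin_cosh (node n))" by (rule norm_deriv_sin_cosh_node)
  finally show ?thesis by auto
qed

section \<open>Rectangles between the zeros\<close>

text \<open>The sides \<open>Re w = \<plusminus>(N + 1/2)\<pi>\<close> and \<open>Im w = \<plusminus>N\<pi>\<close> lie halfway between consecutive zeros
  of \<open>sin w\<close> and of \<open>cos(iw)\<close>, respectively.\<close>

definition corner :: "nat \<Rightarrow> complex" where
  "corner N = Complex ((real N + 1/2) * pi) (real N * pi)"

text \<open>The residue theorem is applied in this slightly larger open box, which contains no further nodes.\<close>

definition outer_corner :: "nat \<Rightarrow> complex" where
  "outer_corner N = Complex ((real N + 3/4) * pi) ((real N + 1/4) * pi)"

lemma path_image_rectpath_corner: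
  "path_image (rectpath (- corner N) (corner N)) =
     {w. \<bar>Re w\<bar> = (real N + 1/2) * pi \<and> \<bar>Im w\<bar> \<le> real N * pi} \<union>
     {w. \<bar>Im w\<bar> = real N * pi \<and> \<bar>Re w\<bar> \<le> (real N + 1/2) * pi}"
proof -
  have abs_eq: "\<bar>x\<bar> = R \<longleftrightarrow> x = - R \<or> x = R" if "0 \<le> R" for x R :: real
    using that by auto
  have le: "Re (- corner N) \<le> Re (corner N)" "Im (- corner N) \<le> Im (corner N)"
    by (simp_all add: corner_def)
  show ?thesis
    unfolding path_image_rectpath[OF le] abs_eq[of "real N * pi", simplified] abs_le_iff
      abs_eq[of "(real N + 1/2) * pi", simplified]
    by (auto simp: corner_def)
qed

lemma norm_sin_cosh_on_rectpath_corner: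
  assumes N: "1 \<le> N" and w: "w \<in> path_image (rectpath (- corner N) (corner N))"
  shows "exp (real N * pi) / 8 \<le> norm (sin_cosh w)"
proof -
  have "1 * 3 \<le> real N * pi" using N pi_gt3 by (intro mult_mono) auto
  then have Npi: "1 \<le> real N * pi" by simp
  from w consider "\<bar>Re w\<bar> = (real N + 1/2) * pi" | "\<bar>Im w\<bar> = real N * pi"
    unfolding path_image_rectpath_corner by blast
  then show ?thesis
  proof cases
    case 1
    have "cos (2 * Re w) = -1"
    proof -
      have "2 * Re w = (2 * real N + 1) * pi \<or> 2 * Re w = - ((2 * real N + 1) * pi)"
        using 1 by (auto simp: abs_if algebra_simps split: if_splits)
      moreover have "cos ((2 * real N + 1) * pi) = -1"
        using cos_npi[of "2 * N + 1"] by (simp add: algebra_simps)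
      ultimately show ?thesis by auto
    qed
    then have s: "1/2 \<le> norm (sin w)" by (rule norm_sin_ge_half)
    have r: "real N * pi \<le> \<bar>Re w\<bar>" using 1 by (simp add: algebra_simps)
    then have "exp \<bar>Re w\<bar> / 4 \<le> norm (cos (\<i> * w))"
      using Npi by (intro norm_cos_i_times_ge_exp_abs_Re) linarith
    then have "1/2 * (exp \<bar>Re w\<bar> / 4) \<le> norm (sin w) * norm (cos (\<i> * w))"
      using s by (intro mult_mono) simp_all
    moreover have "exp (real N * pi) / 8 \<le> 1/2 * (exp \<bar>Re w\<bar> / 4)" using r by simp
    ultimately have "exp (real N * pi) / 8 \<le> norm (sin w) * norm (cos (\<i> * w))" by linarith
    then show ?thesis by (simp add: sin_cosh_def norm_mult)
  next
    case 2
    then have "Im w = - (real N * pi) \<or> Im w = real N * pi" by auto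
    then have "(cos (Im w))\<^sup>2 = 1" by (auto simp: power_mult[symmetric])
    then have "1 \<le> norm (cos (\<i> * w))" by (rule norm_cos_i_times_ge_1)
    moreover have "exp (real N * pi) / 4 \<le> norm (sin w)"
      using 2 Npi norm_sin_ge_exp_abs_Im[of w] by simp
    ultimately have "exp (real N * pi) / 4 * 1 \<le> norm (sin w) * norm (cos (\<i> * w))"
      by (intro mult_mono) simp_all
    then show ?thesis unfolding sin_cosh_def norm_mult using exp_ge_zero[of "real N * pi"] by linarith
  qed
qed

lemma mem_box_minus_iff: "z \<in> box (- c) c \<longleftrightarrow> \<bar>Re z\<bar> < Re c \<and> \<bar>Im z\<bar> < Im c"
  by (auto simp: in_box_complex_iff abs_less_iff)

lemma node_in_box_corner:
  assumes n: "n < 4 * N + 1" and N: "1 \<le> N"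
  shows "node n \<in> box (- corner N) (corner N)"
proof -
  have le_N: "x * pi \<le> real N * pi" if "x \<le> real N" for x
    using that by (simp add: mult_right_mono)
  have re: "\<bar>x * pi\<bar> < (real N + 1/2) * pi" if "0 \<le> x" "x \<le> real N" for x
  proof -
    have "\<bar>x * pi\<bar> = x * pi" using that(1) by simp
    then show ?thesis using le_N[OF that(2)] pi_gt_zero distrib_right[of "real N" "1/2" pi] by linarith
  qed
  have im: "\<bar>(real m + 1/2) * pi\<bar> < real N * pi" if "m + 1 \<le> N" for m
  proof -
    have "(real m + 1) * pi \<le> real N * pi" using that by (intro le_N) simp
    moreover have "\<bar>(real m + 1/2) * pi\<bar> = (real m + 1/2) * pi" by simp
    ultimately show ?thesis
      using pi_gt_zero distrib_right[of "real m" 1 pi] distrib_right[of "real m" "1/2" pi] by linarith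
  qed
  have "0 < real N * pi" "0 < (real N + 1/2) * pi" using N by simp_all
  then show ?thesis
  proof (cases n rule: node_cases)
    case (real_pos m)
    then have "real m \<le> real N" using n by simp
    then show ?thesis using re[of "real m"] \<open>0 < real N * pi\<close>
      unfolding real_pos(2) mem_box_minus_iff corner_def by simp
  next
    case (real_neg m)
    then have "real m + 1 \<le> real N" using n by simp
    then show ?thesis using re[of "real m + 1"] \<open>0 < real N * pi\<close>
      unfolding real_neg(2) mem_box_minus_iff corner_def by (simp add: abs_mult)
  next
    case (imag_pos m)
    then have "m + 1 \<le> N" using n by simp
    then show ?thesis using im[of m] \<open>0 < (real N + 1/2) * pi\<close>
      unfolding imag_pos(2) mem_box_minus_iff corner_def by simp
  next
    case (imag_neg m)
    then have "m + 1 \<le> N" using n by simp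
    then show ?thesis using im[of m] \<open>0 < (real N + 1/2) * pi\<close>
      unfolding imag_neg(2) mem_box_minus_iff corner_def by (simp add: abs_mult)
  qed
qed

lemma node_in_box_outer_corner_imp:
  assumes "node n \<in> box (- outer_corner N) (outer_corner N)"
  shows "n < 4 * N + 1"
proof (cases n rule: node_cases)
  case (real_pos m)
  have "real m * pi < (real N + 3/4) * pi"
    using assms unfolding real_pos(2) by (simp add: in_box_complex_iff outer_corner_def)
  then have "real m < real N + 3/4" by (metis mult_less_cancel_right_pos pi_gt_zero)
  then have "m \<le> N" by linarith
  with real_pos show ?thesis by simp
next
  case (real_neg m)
  have "(real m + 1) * pi < (real N + 3/4) * pi"
    using assms unfolding real_neg(2) by (simp add: in_box_complex_iff outer_corner_def algebra_simps)
  then have "real m + 1 < real N + 3/4" by (metis mult_less_cancel_right_pos pi_gt_zero)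
  then have "m + 1 \<le> N" by linarith
  with real_neg show ?thesis by simp
next
  case (imag_pos m)
  have "(real m + 1/2) * pi < (real N + 1/4) * pi"
    using assms unfolding imag_pos(2) by (simp add: in_box_complex_iff outer_corner_def)
  then have "real m + 1/2 < real N + 1/4" by (metis mult_less_cancel_right_pos pi_gt_zero)
  then have "m + 1 \<le> N" by linarith
  with imag_pos show ?thesis by simp
next
  case (imag_neg m)
  have "(real m + 1/2) * pi < (real N + 1/4) * pi"
    using assms unfolding imag_neg(2) by (simp add: in_box_complex_iff outer_corner_def algebra_simps)
  then have "real m + 1/2 < real N + 1/4" by (metis mult_less_cancel_right_pos pi_gt_zero)
  then have "m + 1 \<le> N" by linarith
  with imag_neg show ?thesis by simp
qed

section \<open>Interpolation by residues\<close>

lemma open_sin_cosh_nonzero: "open {w. sin_cosh w \<noteq> 0}"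
  by (rule open_Collect_neq) (auto intro!: holomorphic_on_imp_continuous_on holomorphic_intros continuous_intros)

lemma residue_sin_cosh_quotient_pole:
  assumes "E holomorphic_on UNIV" and "sin_cosh z \<noteq> 0"
  shows "residue (\<lambda>w. E w / (sin_cosh w * (w - z))) z = E z / sin_cosh z"
proof -
  have "residue (\<lambda>w. (E w / sin_cosh w) / (w - z)) z = E z / sin_cosh z"
    by (rule residue_simple[OF open_sin_cosh_nonzero])
       (use assms in \<open>auto intro!: holomorphic_intros holomorphic_on_subset[OF assms(1)]\<close>)
  then show ?thesis by (simp add: divide_divide_eq_left)
qed

text \<open>The hypothesis \<open>E (node n) \<noteq> 0\<close> is only needed by \<open>residue_simple_pole_deriv\<close>; it holds for the
  functions used below.\<close>

lemma residue_sin_cosh_quotient_node: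
  assumes E: "E holomorphic_on UNIV" and z: "z \<notin> range node" and nz: "E (node n) \<noteq> 0"
  shows "residue (\<lambda>w. E w / (sin_cosh w * (w - z))) (node n)
       = - (E (node n) / (deriv sin_cosh (node n) * (z - node n)))"
proof -
  define t where "t = node n"
  have tz: "t \<noteq> z" using z unfolding t_def by auto
  have "residue (\<lambda>w. (E w / (w - z)) / sin_cosh w) t = (E t / (t - z)) / deriv sin_cosh t"
  proof (rule residue_simple_pole_deriv[where s = "ball t (dist t z)"])
    show "(\<lambda>w. E w / (w - z)) holomorphic_on ball t (dist t z)"
      by (auto intro!: holomorphic_intros holomorphic_on_subset[OF E])
    show "t \<in> ball t (dist t z)" using tz by simp
    show "sin_cosh t = 0" unfolding t_def using sin_cosh_eq_0_iff by auto
    show "E t / (t - z) \<noteq> 0" using nz tz unfolding t_def by simp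
    show "deriv sin_cosh t \<noteq> 0" unfolding t_def by (rule deriv_sin_cosh_node_nonzero)
  qed (simp_all add: holomorphic_intros sin_cosh_has_deriv)
  also have "\<dots> = - (E t / (deriv sin_cosh t * (z - t)))"
    using tz deriv_sin_cosh_node_nonzero[of n] unfolding t_def by (simp add: field_simps)
  finally show ?thesis unfolding t_def by (simp add: divide_divide_eq_left mult.commute)
qed

lemma cbox_corner_subset_box_outer_corner:
  "cbox (- corner N) (corner N) \<subseteq> box (- outer_corner N) (outer_corner N)"
proof
  fix w assume "w \<in> cbox (- corner N) (corner N)"
  then have "\<bar>Re w\<bar> \<le> (real N + 1/2) * pi" "\<bar>Im w\<bar> \<le> real N * pi"
    unfolding in_cbox_complex_iff corner_def by auto
  moreover have "(real N + 1/2) * pi < (real N + 3/4) * pi" "real N * pi < (real N + 1/4) * pi"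
    by (simp_all add: algebra_simps)
  ultimately show "w \<in> box (- outer_corner N) (outer_corner N)"
    unfolding mem_box_minus_iff outer_corner_def complex.sel by linarith
qed

lemma contour_integral_rectpath_corner_sin_cosh_quotient:
  assumes E: "E holomorphic_on UNIV" and nz: "\<And>n. E (node n) \<noteq> 0"
    and z: "z \<notin> range node" "z \<in> box (- corner N) (corner N)" and N: "1 \<le> N"
  shows "contour_integral (rectpath (- corner N) (corner N)) (\<lambda>w. E w / (sin_cosh w * (w - z)))
       = 2 * pi * \<i> * (E z / sin_cosh z - (\<Sum>n<4*N+1. E (node n) / (deriv sin_cosh (node n) * (z - node n))))"
proof -
  define g where "g = rectpath (- corner N) (corner N)"
  define S where "S = box (- outer_corner N) (outer_corner N)"
  define poles where "poles = insert z (node ` {..<4*N+1})"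
  define f where "f = (\<lambda>w. E w / (sin_cosh w * (w - z)))"
  have le: "Re (- corner N) \<le> Re (corner N)" "Im (- corner N) \<le> Im (corner N)"
    by (simp_all add: corner_def)
  have cbox_S: "cbox (- corner N) (corner N) \<subseteq> S"
    unfolding S_def by (rule cbox_corner_subset_box_outer_corner)
  have g_nonzero: "sin_cosh w \<noteq> 0" if "w \<in> path_image g" for w
    using norm_sin_cosh_on_rectpath_corner[OF N that[unfolded g_def]]
    by (metis exp_gt_zero divide_pos_pos norm_zero not_le zero_less_numeral)
  have z_g: "z \<notin> path_image g"
    using path_image_rectpath_inter_box[OF le] z(2) unfolding g_def by blast
  have holo: "f holomorphic_on S - poles"
  proof -
    have "S - poles \<subseteq> {w. sin_cosh w \<noteq> 0} - {z}"
      using node_in_box_outer_corner_imp sin_cosh_eq_0_iff unfolding S_def poles_def by fastforce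
    then show ?thesis unfolding f_def
      by (auto intro!: holomorphic_intros holomorphic_on_subset[OF E])
  qed
  have g_S: "path_image g \<subseteq> S - poles"
    using path_image_rectpath_subset_cbox[OF le] cbox_S g_nonzero z_g sin_cosh_eq_0_iff
    unfolding g_def poles_def by fastforce
  have "contour_integral g f = 2 * pi * \<i> * (\<Sum>p\<in>poles. winding_number g p * residue f p)"
  proof (rule Residue_theorem)
    show "\<forall>w. w \<notin> S \<longrightarrow> winding_number g w = 0"
      using cbox_S winding_number_rectpath_outside[OF le] unfolding g_def by blast
  qed (use holo g_S in \<open>auto simp: S_def poles_def g_def convex_connected\<close>)
  also have "(\<Sum>p\<in>poles. winding_number g p * residue f p) = (\<Sum>p\<in>poles. residue f p)"
    using z(2) node_in_box_corner[OF _ N] winding_number_rectpath[OF _] unfolding poles_def g_def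
    by (intro sum.cong) auto
  also have "\<dots> = residue f z + (\<Sum>n<4*N+1. residue f (node n))"
    unfolding poles_def using z(1) inj_node
    by (subst sum.insert) (auto simp: sum.reindex inj_on_subset)
  finally show ?thesis
    using residue_sin_cosh_quotient_pole[OF E] residue_sin_cosh_quotient_node[OF E z(1) nz] z(1)
      sin_cosh_eq_0_iff
    unfolding f_def g_def by (simp add: sum_negf)
qed

definition lin_exp :: "real \<Rightarrow> complex \<Rightarrow> complex \<Rightarrow> complex \<Rightarrow> complex" where
  "lin_exp b \<alpha> \<beta> w = (\<alpha> * w + \<beta>) * exp (of_real b * w)"

lemma holomorphic_lin_exp [holomorphic_intros]: "lin_exp b \<alpha> \<beta> holomorphic_on S"
  unfolding lin_exp_def by (intro holomorphic_intros)

lemma norm_lin_exp_le: "norm (lin_exp b \<alpha> \<beta> w) \<le> (norm \<alpha> * norm w + norm \<beta>) * exp (b * Re w)"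
proof -
  have "norm (\<alpha> * w + \<beta>) \<le> norm \<alpha> * norm w + norm \<beta>"
    by (metis norm_mult norm_triangle_ineq)
  moreover have "norm (exp (of_real b * w)) = exp (b * Re w)" by simp
  ultimately show ?thesis unfolding lin_exp_def norm_mult by (metis exp_ge_zero mult_right_mono)
qed

lemma exp_mult_Re_le:
  assumes "\<bar>b\<bar> \<le> 1/2" and "\<bar>Re w\<bar> \<le> r"
  shows "exp (b * Re w) \<le> exp (r / 2)"
proof -
  have "b * Re w \<le> \<bar>b\<bar> * \<bar>Re w\<bar>" by (metis abs_ge_self abs_mult)
  also have "\<dots> \<le> 1/2 * r" using assms by (intro mult_mono) simp_all
  finally show ?thesis by simp
qed

lemma norm_lin_exp_div_deriv_node_le:
  assumes b: "\<bar>b\<bar> \<le> 1/2"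
  shows "norm (lin_exp b \<alpha> \<beta> (node n) / deriv sin_cosh (node n))
       \<le> 4 * (4 * norm \<alpha> + norm \<beta>) * exp (3 * pi / 16) * exp (- pi / 16) ^ n"
proof -
  define r where "r = norm (node n)"
  have r0: "0 \<le> r" unfolding r_def by simp
  have "norm (lin_exp b \<alpha> \<beta> (node n)) \<le> (norm \<alpha> * r + norm \<beta>) * exp (b * Re (node n))"
    unfolding r_def by (rule norm_lin_exp_le)
  also have "\<dots> \<le> (norm \<alpha> * r + norm \<beta>) * exp (r / 2)"
    unfolding r_def using exp_mult_Re_le[OF b abs_Re_le_cmod] by (intro mult_left_mono) simp_all
  finally have "norm (lin_exp b \<alpha> \<beta> (node n) / deriv sin_cosh (node n))
      \<le> (norm \<alpha> * r + norm \<beta>) * exp (r / 2) / (exp r / 4)"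
    unfolding norm_divide using norm_deriv_sin_cosh_node[of n] r0 unfolding r_def
    by (intro frac_le) simp_all
  also have "\<dots> = 4 * (norm \<alpha> * r + norm \<beta>) * exp (- r / 2)"
  proof -
    have "exp (r / 2) / exp r = exp (- r / 2)" by (simp add: exp_diff[symmetric])
    then show ?thesis by (simp add: field_simps)
  qed
  also have "\<dots> \<le> 4 * ((4 * norm \<alpha> + norm \<beta>) * exp (r / 4)) * exp (- r / 2)"
  proof -
    have "r \<le> 4 * exp (r / 4)" using exp_ge_add_one_self[of "r / 4"] by linarith
    then have "norm \<alpha> * r \<le> norm \<alpha> * (4 * exp (r / 4))" by (intro mult_left_mono) simp_all
    moreover have "norm \<beta> * 1 \<le> norm \<beta> * exp (r / 4)" using r0 by (intro mult_left_mono) simp_all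
    ultimately show ?thesis by (intro mult_right_mono mult_left_mono) (simp_all add: algebra_simps)
  qed
  also have "\<dots> = 4 * (4 * norm \<alpha> + norm \<beta>) * exp (- r / 4)"
    by (simp add: mult.assoc exp_add[symmetric])
  also have "\<dots> \<le> 4 * (4 * norm \<alpha> + norm \<beta>) * exp (3 * pi / 16 + real n * (- pi / 16))"
    using norm_node_ge[of n] unfolding r_def by (intro mult_left_mono) (simp_all add: field_simps)
  also have "\<dots> = 4 * (4 * norm \<alpha> + norm \<beta>) * exp (3 * pi / 16) * exp (- pi / 16) ^ n"
    by (simp only: exp_add exp_of_nat_mult mult.assoc)
  finally show ?thesis .
qed

lemma norm_lin_exp_quotient_on_rectpath_corner:
  assumes b: "\<bar>b\<bar> \<le> 1/2" and N: "1 \<le> N" and z: "norm z + 1 \<le> real N * pi"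
    and w: "w \<in> path_image (rectpath (- corner N) (corner N))"
  shows "norm (lin_exp b \<alpha> \<beta> w / (sin_cosh w * (w - z)))
       \<le> (norm \<alpha> + norm \<beta>) * ((2 * real N + 2) * pi * exp ((real N + 1/2) * pi / 2) * 8 / exp (real N * pi))"
proof -
  define R where "R = (2 * real N + 2) * pi"
  have w_Re: "\<bar>Re w\<bar> \<le> (real N + 1/2) * pi" and w_Im: "\<bar>Im w\<bar> \<le> real N * pi"
    and w_side: "\<bar>Re w\<bar> = (real N + 1/2) * pi \<or> \<bar>Im w\<bar> = real N * pi"
    using w unfolding path_image_rectpath_corner by (auto simp: algebra_simps)
  have "real N * pi \<le> (real N + 1/2) * pi" by (simp add: algebra_simps)
  then have "real N * pi \<le> norm w"
    using w_side abs_Re_le_cmod[of w] abs_Im_le_cmod[of w] by linarith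
  then have wz: "1 \<le> norm (w - z)" using norm_triangle_ineq2[of w z] z by linarith
  have "norm w \<le> \<bar>Re w\<bar> + \<bar>Im w\<bar>" by (rule cmod_le)
  also have "\<dots> \<le> (real N + 1/2) * pi + real N * pi" using w_Re w_Im by linarith
  also have "\<dots> \<le> R" unfolding R_def using pi_gt_zero by (simp add: algebra_simps)
  finally have w_R: "norm w \<le> R" .
  have "1 * pi \<le> (2 * real N + 2) * pi" by (intro mult_right_mono) simp_all
  then have "1 \<le> R" unfolding R_def using pi_gt3 by linarith
  note R1 = this
  then have "norm \<alpha> * norm w + norm \<beta> \<le> (norm \<alpha> + norm \<beta>) * R"
    using w_R mult_left_mono[OF w_R, of "norm \<alpha>"] mult_left_mono[of 1 R "norm \<beta>"] by (simp add: algebra_simps)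
  then have "norm (lin_exp b \<alpha> \<beta> w) \<le> (norm \<alpha> + norm \<beta>) * R * exp ((real N + 1/2) * pi / 2)"
    using norm_lin_exp_le[of b \<alpha> \<beta> w] exp_mult_Re_le[OF b w_Re]
    by (meson mult_mono order_trans add_nonneg_nonneg mult_nonneg_nonneg norm_ge_zero exp_ge_zero)
  moreover have "exp (real N * pi) / 8 * 1 \<le> norm (sin_cosh w) * norm (w - z)"
    using norm_sin_cosh_on_rectpath_corner[OF N w] wz by (intro mult_mono) simp_all
  ultimately have "norm (lin_exp b \<alpha> \<beta> w) / norm (sin_cosh w * (w - z))
      \<le> (norm \<alpha> + norm \<beta>) * R * exp ((real N + 1/2) * pi / 2) / (exp (real N * pi) / 8)"
    unfolding norm_mult using R1 by (intro frac_le) simp_all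
  then show ?thesis unfolding R_def norm_divide by (simp add: field_simps)
qed

lemma lin_exp_interpolation_error:
  assumes b: "\<bar>b\<bar> \<le> 1/2" and nz: "\<And>n. lin_exp b \<alpha> \<beta> (node n) \<noteq> 0" and z: "z \<notin> range node"
    and N: "1 \<le> N" and Nz: "norm z + 1 \<le> real N * pi"
  shows "norm (lin_exp b \<alpha> \<beta> z / sin_cosh z
             - (\<Sum>n<4*N+1. lin_exp b \<alpha> \<beta> (node n) / (deriv sin_cosh (node n) * (z - node n))))
       \<le> (norm \<alpha> + norm \<beta>) * ((2 * real N + 2) * pi * exp ((real N + 1/2) * pi / 2) * 8 / exp (real N * pi))
         * (4 * real N + 1)"
proof -
  define B where
    "B = (norm \<alpha> + norm \<beta>) * ((2 * real N + 2) * pi * exp ((real N + 1/2) * pi / 2) * 8 / exp (real N * pi))"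
  define f where "f = (\<lambda>w. lin_exp b \<alpha> \<beta> w / (sin_cosh w * (w - z)))"
  define X where "X = lin_exp b \<alpha> \<beta> z / sin_cosh z
    - (\<Sum>n<4*N+1. lin_exp b \<alpha> \<beta> (node n) / (deriv sin_cosh (node n) * (z - node n)))"
  have le: "Re (- corner N) \<le> Re (corner N)" "Im (- corner N) \<le> Im (corner N)"
    by (simp_all add: corner_def)
  have "real N * pi \<le> (real N + 1/2) * pi" by (simp add: algebra_simps)
  then have z_box: "z \<in> box (- corner N) (corner N)"
    using abs_Re_le_cmod[of z] abs_Im_le_cmod[of z] Nz unfolding mem_box_minus_iff corner_def complex.sel
    by (intro conjI; linarith)
  have "f contour_integrable_on rectpath (- corner N) (corner N)"
  proof (rule contour_integrable_holomorphic_simple[where S = "{w. sin_cosh w \<noteq> 0} - {z}"])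
    show "f holomorphic_on {w. sin_cosh w \<noteq> 0} - {z}" unfolding f_def by (auto intro!: holomorphic_intros)
    show "path_image (rectpath (- corner N) (corner N)) \<subseteq> {w. sin_cosh w \<noteq> 0} - {z}"
      using norm_sin_cosh_on_rectpath_corner[OF N] path_image_rectpath_inter_box[OF le] z_box
      by (fastforce dest: order.trans[OF _ norm_ge_zero] intro: exp_gt_zero)
  qed (auto intro: open_Diff open_sin_cosh_nonzero)
  then have "norm (contour_integral (rectpath (- corner N) (corner N)) f) \<le> B * ((8 * real N + 2) * pi)"
    using contour_integral_rectpath_bound[of f "- corner N" "corner N" B]
      norm_lin_exp_quotient_on_rectpath_corner[OF b N Nz] unfolding f_def B_def corner_def
    by (simp add: algebra_simps)
  also have "B * ((8 * real N + 2) * pi) = 2 * pi * (B * (4 * real N + 1))" by (simp add: algebra_simps)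
  finally have "2 * pi * norm X \<le> 2 * pi * (B * (4 * real N + 1))"
    unfolding contour_integral_rectpath_corner_sin_cosh_quotient[OF holomorphic_lin_exp nz z z_box N, folded f_def X_def]
    by (simp add: norm_mult)
  then have "norm X \<le> B * (4 * real N + 1)" by simp
  then show ?thesis unfolding X_def B_def .
qed

lemma summable_lin_exp_interpolation_series:
  assumes b: "\<bar>b\<bar> \<le> 1/2"
  shows "summable (\<lambda>n. lin_exp b \<alpha> \<beta> (node n) / (deriv sin_cosh (node n) * (z - node n)))"
proof -
  define K where "K = 4 * (4 * norm \<alpha> + norm \<beta>) * exp (3 * pi / 16)"
  have "eventually (\<lambda>n. norm z + 1 \<le> norm (node n)) sequentially"
    using filterlim_norm_node by (simp add: filterlim_at_top)
  then have "eventually (\<lambda>n. norm (lin_exp b \<alpha> \<beta> (node n) / (deriv sin_cosh (node n) * (z - node n)))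
      \<le> K * exp (- pi / 16) ^ n) sequentially"
  proof eventually_elim
    case (elim n)
    then have "1 \<le> norm (z - node n)"
      using norm_triangle_ineq2[of "node n" z] by (simp add: norm_minus_commute)
    have "norm (lin_exp b \<alpha> \<beta> (node n) / (deriv sin_cosh (node n) * (z - node n)))
        = norm (lin_exp b \<alpha> \<beta> (node n) / deriv sin_cosh (node n)) / norm (z - node n)"
      by (simp add: norm_divide norm_mult)
    also have "\<dots> \<le> norm (lin_exp b \<alpha> \<beta> (node n) / deriv sin_cosh (node n)) / 1"
      using \<open>1 \<le> norm (z - node n)\<close> by (intro divide_left_mono) auto
    also have "\<dots> \<le> K * exp (- pi / 16) ^ n"
      unfolding K_def using norm_lin_exp_div_deriv_node_le[OF b] by simp
    finally show ?case .
  qed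
  moreover have "summable (\<lambda>n. K * exp (- pi / 16) ^ n)" by (simp add: summable_mult summable_geometric)
  ultimately show ?thesis by (rule summable_comparison_test_ev)
qed

lemma sums_if_partial_sums_subseq_tendsto:
  fixes f :: "nat \<Rightarrow> 'a :: {t2_space, topological_comm_monoid_add}"
  assumes "summable f" and "strict_mono r" and "(\<lambda>N. \<Sum>n<r N. f n) \<longlonglongrightarrow> L"
  shows "f sums L"
proof -
  have "(\<lambda>N. \<Sum>n<r N. f n) \<longlonglongrightarrow> suminf f"
    using LIMSEQ_subseq_LIMSEQ[OF summable_LIMSEQ[OF assms(1)] assms(2)] by (simp add: o_def)
  then have "suminf f = L" using assms(3) by (rule LIMSEQ_unique)
  then show ?thesis using summable_sums[OF assms(1)] by simp
qed

lemma lin_exp_interpolation: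
  assumes b: "\<bar>b\<bar> \<le> 1/2" and nz: "\<And>n. lin_exp b \<alpha> \<beta> (node n) \<noteq> 0" and z: "z \<notin> range node"
  shows "(\<lambda>n. lin_exp b \<alpha> \<beta> (node n) / (deriv sin_cosh (node n) * (z - node n)))
           sums (lin_exp b \<alpha> \<beta> z / sin_cosh z)"
proof (rule sums_if_partial_sums_subseq_tendsto[OF summable_lin_exp_interpolation_series[OF b]])
  define c where "c n = lin_exp b \<alpha> \<beta> (node n) / (deriv sin_cosh (node n) * (z - node n))" for n
  define L where "L = lin_exp b \<alpha> \<beta> z / sin_cosh z"
  show "strict_mono (\<lambda>N::nat. 4 * N + 1)" by (simp add: strict_mono_def)
  have "((\<lambda>x::real. (2 * x + 2) * pi * exp ((x + 1/2) * pi / 2) * 8 / exp (x * pi) * (4 * x + 1)) \<longlongrightarrow> 0) at_top"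
    by real_asymp
  then have bound_lim: "(\<lambda>N. (norm \<alpha> + norm \<beta>) * ((2 * real N + 2) * pi * exp ((real N + 1/2) * pi / 2) * 8
      / exp (real N * pi)) * (4 * real N + 1)) \<longlonglongrightarrow> 0"
    using tendsto_mult_right_zero filterlim_compose[OF _ filterlim_real_sequentially] by (fastforce simp: mult.assoc)
  have "filterlim (\<lambda>N. real N * pi) at_top sequentially" by real_asymp
  then have "eventually (\<lambda>N. norm z + 1 \<le> real N * pi) sequentially" by (simp add: filterlim_at_top)
  then have "eventually (\<lambda>N. norm (L - (\<Sum>n<4*N+1. c n)) \<le> (norm \<alpha> + norm \<beta>)
      * ((2 * real N + 2) * pi * exp ((real N + 1/2) * pi / 2) * 8 / exp (real N * pi)) * (4 * real N + 1))
      sequentially"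
    using eventually_ge_at_top[of 1]
    unfolding L_def c_def by eventually_elim (rule lin_exp_interpolation_error[OF b nz z])
  then have "(\<lambda>N. L - (\<Sum>n<4*N+1. c n)) \<longlonglongrightarrow> 0"
    using bound_lim by (rule Lim_null_comparison)
  then have "(\<lambda>N. L - (L - (\<Sum>n<4*N+1. c n))) \<longlonglongrightarrow> L - 0" by (intro tendsto_diff tendsto_const)
  then show "(\<lambda>N. \<Sum>n<4*N+1. c n) \<longlonglongrightarrow> L" by simp
qed

section \<open>The space with \<open>A(z) = exp(z^2) sin z cos(iz)\<close> and \<open>\<mu> = 1\<close>\<close>

definition exp_sin_cosh :: "complex \<Rightarrow> complex" where
  "exp_sin_cosh z = exp (z\<^sup>2) * sin_cosh z"

lemma deriv_exp_sin_cosh_node: "deriv exp_sin_cosh (node n) = exp ((node n)\<^sup>2) * deriv sin_cosh (node n)"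
proof -
  have "(exp_sin_cosh has_field_derivative
      2 * node n * exp ((node n)\<^sup>2) * sin_cosh (node n) + exp ((node n)\<^sup>2) * deriv sin_cosh (node n)) (at (node n))"
    unfolding exp_sin_cosh_def[abs_def]
    by (auto intro!: derivative_eq_intros sin_cosh_has_deriv simp: algebra_simps)
  moreover have "sin_cosh (node n) = 0" using sin_cosh_eq_0_iff by blast
  ultimately show ?thesis by (simp add: DERIV_imp_deriv)
qed

lemma summable_norm_node_powr: "summable (\<lambda>n. norm (node n) powr (-2))"
proof (rule summable_comparison_test_ev)
  show "eventually (\<lambda>n. norm (norm (node n) powr (-2)) \<le> 64 * real n powr (-2)) sequentially"
    using eventually_ge_at_top[of 8]
  proof eventually_elim
    case (elim n)
    have "8 * (2 * 3 - 1) \<le> real n * (2 * pi - 1)" using elim pi_gt3 by (intro mult_mono) auto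
    then have "real n \<le> 2 * (pi * real n - 3 * pi)" using pi_less_4 by (simp add: algebra_simps)
    then have "real n / 8 \<le> (real n - 3) * pi / 4" by (simp add: field_simps)
    then have "real n / 8 \<le> norm (node n)" using norm_node_ge[of n] by linarith
    moreover have "0 < real n / 8" using elim by simp
    ultimately have "norm (node n) powr (-2) \<le> (real n / 8) powr (-2)" by (intro powr_mono2') simp_all
    also have "\<dots> = 64 * real n powr (-2)" using elim by (simp add: powr_divide powr_minus divide_simps)
    finally show ?case by simp
  qed
  show "summable (\<lambda>n. 64 * real n powr (-2))"
    by (intro summable_mult) (simp add: summable_real_powr_iff)
qed

lemma cdb_data_exp_sin_cosh: "cdb_data node exp_sin_cosh (\<lambda>_. 1)"
  unfolding cdb_data_def
proof (intro conjI)
  show "\<exists>p>0. summable (\<lambda>n. if node n = 0 then 0 else norm (node n) powr - p)"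
    by (intro exI[of _ 2] conjI summable_comparison_test[OF _ summable_norm_node_powr]) auto
  show "exp_sin_cosh holomorphic_on UNIV" unfolding exp_sin_cosh_def by (intro holomorphic_intros)
  show "{z. exp_sin_cosh z = 0} = range node" using sin_cosh_eq_0_iff by (auto simp: exp_sin_cosh_def)
  show "\<forall>n. deriv exp_sin_cosh (node n) \<noteq> 0"
    by (simp add: deriv_exp_sin_cosh_node deriv_sin_cosh_node_nonzero)
  show "summable (\<lambda>n. 1 / ((norm (node n))\<^sup>2 + 1))"
  proof (rule summable_comparison_test[OF _ summable_norm_node_powr])
    show "\<exists>N. \<forall>n\<ge>N. norm (1 / ((norm (node n))\<^sup>2 + 1)) \<le> norm (node n) powr (-2)"
    proof (intro exI allI impI)
      fix n :: nat assume "4 \<le> n"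
      then have "0 < (real n - 3) * pi / 4" by simp
      then have "0 < norm (node n)" using norm_node_ge[of n] by linarith
      moreover have "0 < (norm (node n))\<^sup>2 + 1" by (intro add_nonneg_pos) simp_all
      ultimately show "norm (1 / ((norm (node n))\<^sup>2 + 1)) \<le> norm (node n) powr (-2)"
        by (simp add: powr_minus divide_simps del: divide_le_eq_numeral1)
    qed
  qed
qed (simp_all add: inj_node filterlim_norm_node)

lemma norm_exp_sin_cosh_le: "norm (exp_sin_cosh z) \<le> exp ((norm z)\<^sup>2 + 2 * norm z)"
proof -
  have "norm (exp_sin_cosh z) = norm (exp (z\<^sup>2)) * norm (sin z) * norm (cos (\<i> * z))"
    unfolding exp_sin_cosh_def sin_cosh_def by (simp add: norm_mult)
  also have "\<dots> \<le> exp ((norm z)\<^sup>2) * exp (norm z) * exp (norm z)"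
  proof (intro mult_mono)
    show "norm (exp (z\<^sup>2)) \<le> exp ((norm z)\<^sup>2)" using norm_exp[of "z\<^sup>2"] by (simp add: norm_power)
    show "norm (cos (\<i> * z)) \<le> exp (norm z)" using norm_cos_le[of "\<i> * z"] by (simp add: norm_mult)
  qed (simp_all add: norm_sin_le_exp_norm)
  also have "\<dots> = exp ((norm z)\<^sup>2 + 2 * norm z)" by (simp add: exp_add[symmetric])
  finally show ?thesis .
qed

lemma norm_exp_sin_cosh_ge:
  assumes "sin x = 1"
  shows "exp (x\<^sup>2) \<le> norm (exp_sin_cosh (of_real x))"
proof -
  have "(exp x + inverse (exp x)) / 2 = cosh x" by (simp add: cosh_def exp_minus)
  then have "1 \<le> (exp x + inverse (exp x)) / 2" using cosh_real_ge_1[of x] by simp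
  then have "1 \<le> norm (cos (\<i> * of_real x))" unfolding cosh_real[symmetric] norm_of_real by simp
  moreover have "norm (exp_sin_cosh (of_real x)) = exp (x\<^sup>2) * norm (cos (\<i> * of_real x))"
    unfolding exp_sin_cosh_def sin_cosh_def
    by (simp add: norm_mult sin_of_real assms flip: of_real_power exp_of_real)
  ultimately show ?thesis by simp
qed

lemma has_order_exp_sin_cosh: "has_order exp_sin_cosh 2"
  unfolding has_order_def
proof (intro conjI allI impI)
  fix l :: real assume l: "2 < l"
  show "\<exists>R. \<forall>z. R \<le> norm z \<longrightarrow> norm (exp_sin_cosh z) \<le> exp (norm z powr l)"
  proof (intro exI allI impI)
    fix z :: complex assume z: "max 1 (3 powr (1 / (l - 2))) \<le> norm z"
    define r where "r = norm z"
    have r1: "1 \<le> r" using z unfolding r_def by simp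
    have "3 = (3 powr (1 / (l - 2))) powr (l - 2)" using l by (simp add: powr_powr)
    also have "\<dots> \<le> r powr (l - 2)" using z l unfolding r_def by (intro powr_mono2) simp_all
    finally have "r\<^sup>2 * 3 \<le> r\<^sup>2 * r powr (l - 2)" by (intro mult_left_mono) simp_all
    also have "\<dots> = r powr l" using r1 by (simp add: powr_add[symmetric] flip: powr_numeral)
    finally have "r\<^sup>2 * 3 \<le> r powr l" .
    moreover have "r\<^sup>2 + 2 * r \<le> r\<^sup>2 * 3" using r1 by (simp add: power2_eq_square algebra_simps)
    ultimately have "r\<^sup>2 + 2 * r \<le> r powr l" by linarith
    then show "norm (exp_sin_cosh z) \<le> exp (norm z powr l)"
      using norm_exp_sin_cosh_le[of z] unfolding r_def by (meson exp_le_cancel_iff order_trans)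
  qed
next
  fix l :: real assume l: "l < 2"
  show "\<not> (\<exists>R. \<forall>z. R \<le> norm z \<longrightarrow> norm (exp_sin_cosh z) \<le> exp (norm z powr l))"
  proof
    assume "\<exists>R. \<forall>z. R \<le> norm z \<longrightarrow> norm (exp_sin_cosh z) \<le> exp (norm z powr l)"
    then obtain R where R: "\<And>z. R \<le> norm z \<Longrightarrow> norm (exp_sin_cosh z) \<le> exp (norm z powr l)" by blast
    define k :: nat where "k = nat \<lceil>R\<rceil> + 1"
    define x where "x = real (2 * k) * pi + pi / 2"
    have "2 * real k * 1 \<le> 2 * real k * pi" using pi_gt3 by (intro mult_left_mono) simp_all
    then have "2 * real k \<le> x" unfolding x_def using pi_gt_zero by linarith
    moreover have "R + 1 \<le> real k" unfolding k_def by linarith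
    moreover have "1 \<le> real k" unfolding k_def by simp
    ultimately have xR: "R \<le> x" and x1: "1 < x" by linarith+
    have "sin x = 1" unfolding x_def by (simp add: sin_add)
    then have "exp (x\<^sup>2) \<le> norm (exp_sin_cosh (of_real x))" by (rule norm_exp_sin_cosh_ge)
    also have "\<dots> \<le> exp (x powr l)" using R[of "of_real x"] xR x1 by simp
    finally have "exp (x\<^sup>2) \<le> exp (x powr l)" .
    moreover have "x powr l < x\<^sup>2" using l x1 by (simp add: powr_less_mono flip: powr_numeral)
    ultimately show False by simp
  qed
qed

lemma exp_sq_lin_exp_in_cdb_space:
  assumes b: "\<bar>b\<bar> \<le> 1/2" and nz: "\<And>n. lin_exp b \<alpha> \<beta> (node n) \<noteq> 0"
  shows "(\<lambda>z. exp (z\<^sup>2) * lin_exp b \<alpha> \<beta> z) \<in> cdb_space node exp_sin_cosh (\<lambda>_. 1)"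
proof -
  define a where "a n = lin_exp b \<alpha> \<beta> (node n) / deriv sin_cosh (node n)" for n
  define K where "K = 4 * (4 * norm \<alpha> + norm \<beta>) * exp (3 * pi / 16)"
  have "is_l2 a"
    unfolding is_l2_def
  proof (rule summable_comparison_test[OF _ summable_mult[OF summable_geometric[of "exp (- pi / 16) ^ 2"]]])
    have "exp (- pi / 16) ^ 2 = exp (- pi / 8)" by (simp add: power2_eq_square exp_add[symmetric])
    then show "norm (exp (- pi / 16) ^ 2) < 1" by simp
    have "(norm (a n))\<^sup>2 \<le> K\<^sup>2 * (exp (- pi / 16) ^ 2) ^ n" for n
    proof -
      have "norm (a n) \<le> K * exp (- pi / 16) ^ n"
        unfolding a_def K_def by (rule norm_lin_exp_div_deriv_node_le[OF b])
      then have "(norm (a n))\<^sup>2 \<le> (K * exp (- pi / 16) ^ n)\<^sup>2" by (intro power_mono) simp_all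
      then show ?thesis by (simp add: power_mult_distrib power_mult[symmetric] mult.commute)
    qed
    then show "\<exists>N. \<forall>n\<ge>N. norm ((norm (a n))\<^sup>2) \<le> K\<^sup>2 * (exp (- pi / 16) ^ 2) ^ n" by simp
  qed
  moreover have "exp (z\<^sup>2) * lin_exp b \<alpha> \<beta> z = cdb_fun node exp_sin_cosh (\<lambda>_. 1) a z" for z
  proof (cases "z \<in> range node")
    case True
    then obtain m where m: "z = node m" by blast
    then show ?thesis
      using cdb_fun_node[OF inj_node, of exp_sin_cosh "\<lambda>_. 1" a m] deriv_sin_cosh_node_nonzero[of m]
      by (simp add: deriv_exp_sin_cosh_node a_def)
  next
    case False
    have "(\<lambda>n. a n * of_real (sqrt 1) / (z - node n)) sums (lin_exp b \<alpha> \<beta> z / sin_cosh z)"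
      using lin_exp_interpolation[OF b nz False] unfolding a_def by (simp add: divide_divide_eq_left)
    moreover have "sin_cosh z \<noteq> 0" using False sin_cosh_eq_0_iff by blast
    ultimately show ?thesis
      using False unfolding cdb_fun_def exp_sin_cosh_def by (simp add: sums_unique[symmetric])
  qed
  ultimately show ?thesis unfolding cdb_space_def by blast
qed

definition g_ex :: "real \<Rightarrow> complex \<Rightarrow> complex" where
  "g_ex b z = exp (z\<^sup>2) * exp (of_real b * z)"

definition G_ex :: "real \<Rightarrow> complex \<Rightarrow> complex" where
  "G_ex b z = (z - 1) * g_ex b z"

lemma g_ex_nonzero: "g_ex b z \<noteq> 0"
  by (simp add: g_ex_def)

lemma cnj_g_ex_cnj: "cnj (g_ex b (cnj z)) = g_ex b z"
  unfolding g_ex_def by (simp add: exp_cnj)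

lemma multiples_g_ex_subset_iff: "multiples (g_ex b) \<subseteq> multiples (g_ex b') \<longleftrightarrow> b = b'"
proof
  assume "multiples (g_ex b) \<subseteq> multiples (g_ex b')"
  then obtain c where c: "g_ex b = (\<lambda>z. c * g_ex b' z)" unfolding multiples_subset_iff by blast
  have "g_ex b 0 = c * g_ex b' 0" "g_ex b 2 = c * g_ex b' 2" using fun_cong[OF c, of 0] fun_cong[OF c, of 2] by simp_all
  then have "c = 1" "exp (of_real b * 2) = exp (of_real b' * (2::complex))" by (simp_all add: g_ex_def)
  then have "exp (of_real (b * 2)) = exp (of_real (b' * 2) :: complex)" by simp
  then have "of_real (exp (b * 2)) = (of_real (exp (b' * 2)) :: complex)" by (simp only: exp_of_real)
  then have "exp (b * 2) = exp (b' * 2)" by (simp only: of_real_eq_iff)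
  then show "b = b'" by simp
qed simp

lemma node_ne_1: "node n \<noteq> 1"
proof -
  have "sin (1::real) > 0" using pi_gt3 by (intro sin_gt_zero) simp_all
  then have "sin (1::complex) \<noteq> 0" by (metis of_real_1 of_real_eq_0_iff sin_of_real less_irrefl)
  moreover have "cos (\<i> * of_real 1) \<noteq> 0"
    unfolding cosh_real[symmetric] of_real_eq_0_iff
    using add_pos_pos[OF exp_gt_zero positive_imp_inverse_positive[OF exp_gt_zero], of 1 1] by simp
  ultimately have "sin_cosh 1 \<noteq> 0" by (simp add: sin_cosh_def)
  then show ?thesis using sin_cosh_eq_0_iff by auto
qed

lemma g_ex_in_cdb_space:
  assumes "\<bar>b\<bar> \<le> 1/2"
  shows "(\<lambda>z. c * g_ex b z) \<in> cdb_space node exp_sin_cosh (\<lambda>_. 1)"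
proof (cases "c = 0")
  case False
  then have "(\<lambda>z. exp (z\<^sup>2) * lin_exp b 0 c z) \<in> cdb_space node exp_sin_cosh (\<lambda>_. 1)"
    by (intro exp_sq_lin_exp_in_cdb_space[OF assms]) (simp add: lin_exp_def)
  then show ?thesis by (simp add: lin_exp_def g_ex_def mult.left_commute)
qed (simp add: zero_in_cdb_space)

lemma G_ex_in_cdb_space:
  assumes "\<bar>b\<bar> \<le> 1/2"
  shows "G_ex b \<in> cdb_space node exp_sin_cosh (\<lambda>_. 1)"
proof -
  have "(\<lambda>z. exp (z\<^sup>2) * lin_exp b 1 (-1) z) \<in> cdb_space node exp_sin_cosh (\<lambda>_. 1)"
    using node_ne_1 by (intro exp_sq_lin_exp_in_cdb_space[OF assms]) (simp add: lin_exp_def)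
  moreover have "(\<lambda>z. exp (z\<^sup>2) * lin_exp b 1 (-1) z) = G_ex b"
    by (auto simp: lin_exp_def G_ex_def g_ex_def fun_eq_iff)
  ultimately show ?thesis by simp
qed

lemma G_ex_eq_0_iff: "G_ex b z = 0 \<longleftrightarrow> z = 1"
  by (simp add: G_ex_def g_ex_nonzero)

lemma deriv_G_ex_1: "deriv (G_ex b) 1 = g_ex b 1"
proof -
  have "(G_ex b has_field_derivative g_ex b 1) (at 1)"
    unfolding G_ex_def[abs_def] g_ex_def by (auto intro!: derivative_eq_intros)
  then show ?thesis by (rule DERIV_imp_deriv)
qed

lemma divq_G_ex: "divq (G_ex b) 1 = g_ex b"
  by (auto simp: divq_def G_ex_def deriv_G_ex_1 fun_eq_iff)

lemma cdb_closed_subspace_multiples_g_ex: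
  assumes "\<bar>b\<bar> \<le> 1/2"
  shows "cdb_closed_subspace node exp_sin_cosh (\<lambda>_. 1) (multiples (g_ex b))"
  using g_ex_in_cdb_space[OF assms] g_ex_nonzero
  by (intro multiples_closed_subspace[OF cdb_data_exp_sin_cosh]) auto

lemma H_G_G_ex:
  assumes "\<bar>b\<bar> \<le> 1/2"
  shows "H_G node exp_sin_cosh (\<lambda>_. 1) (G_ex b) = multiples (g_ex b)"
proof (rule H_G_eq_multiples)
  show "{divq (G_ex b) l | l. G_ex b l = 0} = {g_ex b}"
    by (auto simp: G_ex_eq_0_iff divq_G_ex)
qed (rule cdb_closed_subspace_multiples_g_ex[OF assms])

lemma G_ex_properties:
  assumes b: "\<bar>b\<bar> \<le> 1/2"
  defines "H \<equiv> H_G node exp_sin_cosh (\<lambda>_. 1) (G_ex b)"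
  shows "G_ex b \<in> cdb_space node exp_sin_cosh (\<lambda>_. 1) \<and> G_ex b holomorphic_on UNIV \<and>
    (\<forall>z. G_ex b z = 0 \<longrightarrow> deriv (G_ex b) z \<noteq> 0) \<and>
    (\<forall>l. G_ex b l = 0 \<longrightarrow> divq (G_ex b) l \<in> cdb_space node exp_sin_cosh (\<lambda>_. 1)) \<and>
    cdb_closed_subspace node exp_sin_cosh (\<lambda>_. 1) H \<and>
    nearly_invariant H \<and> star_closed H \<and> no_common_zeros H"
  unfolding H_def H_G_G_ex[OF b]
proof (intro conjI)
  show "G_ex b holomorphic_on UNIV" unfolding G_ex_def g_ex_def by (intro holomorphic_intros)
  show "\<forall>l. G_ex b l = 0 \<longrightarrow> divq (G_ex b) l \<in> cdb_space node exp_sin_cosh (\<lambda>_. 1)"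
    using g_ex_in_cdb_space[OF b, of 1] by (simp add: G_ex_eq_0_iff divq_G_ex)
qed (simp_all add: cdb_closed_subspace_multiples_g_ex[OF b] G_ex_in_cdb_space[OF b] G_ex_eq_0_iff deriv_G_ex_1 g_ex_nonzero cnj_g_ex_cnj
  nearly_invariant_multiples star_closed_multiples no_common_zeros_multiples)

theorem theorem1p5:
  shows "\<exists>(t :: nat \<Rightarrow> complex) (A :: complex \<Rightarrow> complex) (\<mu> :: nat \<Rightarrow> real) G1 G2.
     cdb_data t A \<mu> \<and> has_order A 2 \<and>
     (\<forall>G \<in> {G1, G2}.
        G \<in> cdb_space t A \<mu> \<and> G holomorphic_on UNIV \<and>
        (\<forall>z. G z = 0 \<longrightarrow> deriv G z \<noteq> 0) \<and>
        (\<forall>l. G l = 0 \<longrightarrow> divq G l \<in> cdb_space t A \<mu>) \<and>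
        cdb_closed_subspace t A \<mu> (H_G t A \<mu> G) \<and>
        nearly_invariant (H_G t A \<mu> G) \<and>
        star_closed (H_G t A \<mu> G) \<and>
        no_common_zeros (H_G t A \<mu> G)) \<and>
     \<not> H_G t A \<mu> G1 \<subseteq> H_G t A \<mu> G2 \<and>
     \<not> H_G t A \<mu> G2 \<subseteq> H_G t A \<mu> G1"
proof (intro exI conjI)
  have b: "\<bar>0::real\<bar> \<le> 1/2" "\<bar>1/2::real\<bar> \<le> 1/2" by simp_all
  show "cdb_data node exp_sin_cosh (\<lambda>_. 1)" by (rule cdb_data_exp_sin_cosh)
  show "has_order exp_sin_cosh 2" by (rule has_order_exp_sin_cosh)
  show "\<forall>G\<in>{G_ex 0, G_ex (1/2)}. G \<in> cdb_space node exp_sin_cosh (\<lambda>_. 1) \<and> G holomorphic_on UNIV \<and>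
      (\<forall>z. G z = 0 \<longrightarrow> deriv G z \<noteq> 0) \<and>
      (\<forall>l. G l = 0 \<longrightarrow> divq G l \<in> cdb_space node exp_sin_cosh (\<lambda>_. 1)) \<and>
      cdb_closed_subspace node exp_sin_cosh (\<lambda>_. 1) (H_G node exp_sin_cosh (\<lambda>_. 1) G) \<and>
      nearly_invariant (H_G node exp_sin_cosh (\<lambda>_. 1) G) \<and>
      star_closed (H_G node exp_sin_cosh (\<lambda>_. 1) G) \<and> no_common_zeros (H_G node exp_sin_cosh (\<lambda>_. 1) G)"
    using G_ex_properties[OF b(1)] G_ex_properties[OF b(2)] by blast
  show "\<not> H_G node exp_sin_cosh (\<lambda>_. 1) (G_ex 0) \<subseteq> H_G node exp_sin_cosh (\<lambda>_. 1) (G_ex (1/2))"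
    "\<not> H_G node exp_sin_cosh (\<lambda>_. 1) (G_ex (1/2)) \<subseteq> H_G node exp_sin_cosh (\<lambda>_. 1) (G_ex 0)"
    unfolding H_G_G_ex[OF b(1)] H_G_G_ex[OF b(2)] multiples_g_ex_subset_iff by simp_all
qed

end
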